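(* Let $n=2$, $m=1$, $v_1(x)=x$ and $v_2(x)=\sqrt{2x}$ for $x\ge0$. Then for every $\rho\in(0,1)$ there exist no allocation $\mathbf{x}\in\Psi(\rho)$ and pricing rule $p:\mathbb{R}_{\ge0}\to\mathbb{R}_{\ge0}$ such that $(\mathbf{x},p)$ is a Walrasian equilibrium.
   Context: Single good of supply 1; an allocation is $(x_1,x_2)\in\mathbb{R}^2_{\ge0}$ with $x_1+x_2\le1$. $\Psi(\rho)$ is the set of allocations maximizing $(v_1(x_1)^\rho+v_2(x_2)^\rho)^{1/\rho}$. Quasilinear demand set $D_i(p)=\arg\max_{y\ge0}(v_i(y)-p(y))$. $(\mathbf{x},p)$ is a Walrasian equilibrium if $x_i\in D_i(p)$ for $i=1,2$, $x_1+x_2\le1$, and $x_1+x_2=1$ if the good has nonzero cost (some $y$ has $p(y)>0$). *)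

theory Defs
  imports "HOL-Analysis.Analysis"
begin

text \<open>Single good of supply 1, two agents. An allocation is a pair (x1, x2).\<close>

definition feasible :: "real \<times> real \<Rightarrow> bool" where
  "feasible x \<longleftrightarrow> fst x \<ge> 0 \<and> snd x \<ge> 0 \<and> fst x + snd x \<le> 1"

definition ces_welfare :: "real \<Rightarrow> (real \<Rightarrow> real) \<Rightarrow> (real \<Rightarrow> real) \<Rightarrow> real \<times> real \<Rightarrow> real" where
  "ces_welfare \<rho> v1 v2 x = (v1 (fst x) powr \<rho> + v2 (snd x) powr \<rho>) powr (1 / \<rho>)"

definition Psi :: "real \<Rightarrow> (real \<Rightarrow> real) \<Rightarrow> (real \<Rightarrow> real) \<Rightarrow> (real \<times> real) set" where
  "Psi \<rho> v1 v2 = {x. feasible x \<and>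
      (\<forall>y. feasible y \<longrightarrow> ces_welfare \<rho> v1 v2 y \<le> ces_welfare \<rho> v1 v2 x)}"

definition demand :: "(real \<Rightarrow> real) \<Rightarrow> (real \<Rightarrow> real) \<Rightarrow> real set" where
  "demand v p = {y. y \<ge> 0 \<and> (\<forall>z\<ge>0. v z - p z \<le> v y - p y)}"

definition walrasian_eq :: "(real \<Rightarrow> real) \<Rightarrow> (real \<Rightarrow> real) \<Rightarrow> real \<times> real \<Rightarrow> (real \<Rightarrow> real) \<Rightarrow> bool" where
  "walrasian_eq v1 v2 x p \<longleftrightarrow>
     fst x \<in> demand v1 p \<and> snd x \<in> demand v2 p \<and> fst x + snd x \<le> 1 \<and>
     ((\<exists>y\<ge>0. p y > 0) \<longrightarrow> fst x + snd x = 1)"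

end

theory Submission imports Defs begin

text \<open>In a Walrasian equilibrium with a nonnegative price some bundle must cost something
  (otherwise the first agent, whose valuation is strictly increasing, has no demand), so the
  market clears. Comparing each agent's utility from its own bundle with that from the other's
  gives \<open>v\<^sub>2(x\<^sub>1) - v\<^sub>2(x\<^sub>2) \<le> v\<^sub>1(x\<^sub>1) - v\<^sub>1(x\<^sub>2)\<close>; since \<open>sqrt(2a) - sqrt(2b) > a - b\<close>
  whenever \<open>a > b\<close> and \<open>a + b = 1\<close>, this forces \<open>x\<^sub>1 \<le> 1/2\<close>. On the other hand, along the
  budget line the \<open>\<rho>\<close>-th power of the CES welfare, \<open>t powr \<rho> + (2(1 - t)) powr (\<rho>/2)\<close>, has
  positive derivative on \<open>(0, 1/2]\<close>, so every CES optimum gives the first agent more than \<open>1/2\<close>.\<close>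

lemma demand_exchange_ineq:
  assumes "a \<in> demand v\<^sub>1 p" and "b \<in> demand v\<^sub>2 p"
  shows "v\<^sub>2 a - v\<^sub>2 b \<le> v\<^sub>1 a - v\<^sub>1 b"
proof -
  have "v\<^sub>1 b - p b \<le> v\<^sub>1 a - p a" "v\<^sub>2 a - p a \<le> v\<^sub>2 b - p b"
    using assms by (auto simp: demand_def)
  then show ?thesis by linarith
qed

lemma demand_zero_price_empty:
  assumes "strict_mono_on {0..} v" and "\<forall>y\<ge>0. p y = 0"
  shows "demand v p = {}"
proof -
  have "y \<notin> demand v p" if "y \<ge> 0" for y
  proof -
    have "v y - p y < v (y + 1) - p (y + 1)"
      using strict_mono_onD[OF assms(1), of y "y + 1"] assms(2) that by simp
    moreover have "0 \<le> y + 1"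
      using that by simp
    ultimately show ?thesis
      unfolding demand_def mem_Collect_eq by (meson leD)
  qed
  then show ?thesis
    unfolding demand_def by blast
qed

lemma walrasian_eq_market_clears:
  assumes "walrasian_eq v\<^sub>1 v\<^sub>2 x p" and "strict_mono_on {0..} v\<^sub>1" and "\<forall>y\<ge>0. p y \<ge> 0"
  shows "fst x + snd x = 1"
proof -
  have "demand v\<^sub>1 p \<noteq> {}"
    using assms(1) unfolding walrasian_eq_def by blast
  have "\<exists>y\<ge>0. p y > 0"
  proof (rule ccontr)
    assume "\<not> (\<exists>y\<ge>0. p y > 0)"
    then have "\<forall>y\<ge>0. p y = 0"
      using assms(3) by force
    then show False
      using demand_zero_price_empty[OF assms(2)] \<open>demand v\<^sub>1 p \<noteq> {}\<close> by blast
  qed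
  then show ?thesis
    using assms(1) unfolding walrasian_eq_def by blast
qed

lemma sqrt_double_diff_gt:
  fixes a b :: real
  assumes "0 \<le> b" and "b < a" and "a + b = 1"
  shows "a - b < sqrt (2 * a) - sqrt (2 * b)"
proof -
  define u v where "u = sqrt (2 * a)" and "v = sqrt (2 * b)"
  have u2: "u\<^sup>2 = 2 * a" and v2: "v\<^sup>2 = 2 * b" and "0 \<le> v" and "v < u"
    using assms by (auto simp: u_def v_def)
  \<comment> \<open>\<open>2uv < u\<^sup>2 + v\<^sup>2 = 2\<close>, hence \<open>u + v < 2\<close>, and \<open>u\<^sup>2 - v\<^sup>2 = 2(a - b)\<close>\<close>
  have "0 < (u - v)\<^sup>2"
    using \<open>v < u\<close> by simp
  then have "(u + v)\<^sup>2 < 2\<^sup>2"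
    using u2 v2 assms(3) by (simp add: power2_eq_square algebra_simps)
  then have "u + v < 2"
    by (rule power2_less_imp_less) simp
  have "(u - v) * (u + v) = 2 * (a - b)"
    using u2 v2 by (simp add: power2_eq_square algebra_simps)
  moreover have "(a - b) * (u + v) < (a - b) * 2"
    using \<open>u + v < 2\<close> assms(2) by (intro mult_strict_left_mono) auto
  ultimately have "(a - b) * (u + v) < (u - v) * (u + v)"
    by linarith
  then have "a - b < u - v"
    using \<open>0 \<le> v\<close> \<open>v < u\<close> by (simp add: mult_less_cancel_right)
  then show ?thesis
    by (simp add: u_def v_def)
qed

lemma walrasian_eq_fst_le_half:
  assumes "walrasian_eq (\<lambda>t. t) (\<lambda>t. sqrt (2 * t)) (a, 1 - a) p" and "a \<le> 1"
  shows "a \<le> 1/2"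
proof (rule ccontr)
  assume "\<not> a \<le> 1/2"
  then have "a - (1 - a) < sqrt (2 * a) - sqrt (2 * (1 - a))"
    using assms(2) sqrt_double_diff_gt[of "1 - a" a] by simp
  moreover have "a \<in> demand (\<lambda>t. t) p" and "1 - a \<in> demand (\<lambda>t. sqrt (2 * t)) p"
    using assms(1) unfolding walrasian_eq_def by simp_all
  ultimately show False
    using demand_exchange_ineq by fastforce
qed

definition ces_power_sum :: "real \<Rightarrow> real \<Rightarrow> real" where
  "ces_power_sum \<rho> t = t powr \<rho> + (2 * (1 - t)) powr (\<rho> / 2)"

lemma ces_welfare_budget_line:
  assumes "t \<le> 1"
  shows "ces_welfare \<rho> (\<lambda>t. t) (\<lambda>t. sqrt (2 * t)) (t, 1 - t) = ces_power_sum \<rho> t powr (1 / \<rho>)"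
proof -
  have "sqrt (2 * (1 - t)) powr \<rho> = (2 * (1 - t)) powr (\<rho> / 2)"
    using assms by (simp add: powr_half_sqrt[symmetric] powr_powr)
  then show ?thesis
    by (simp add: ces_welfare_def ces_power_sum_def)
qed

lemma ces_power_sum_deriv:
  fixes \<rho> t :: real
  assumes "0 < t" and "t < 1"
  shows "DERIV (ces_power_sum \<rho>) t :> \<rho> * t powr (\<rho> - 1) - \<rho> * (2 * (1 - t)) powr (\<rho> / 2 - 1)"
proof -
  have outer: "DERIV (\<lambda>u. u powr (\<rho> / 2)) (2 * (1 - t)) :> \<rho> / 2 * (2 * (1 - t)) powr (\<rho> / 2 - 1)"
    using has_real_derivative_powr[of "2 * (1 - t)" "\<rho> / 2"] assms by simp
  have inner: "DERIV (\<lambda>t. 2 * (1 - t)) t :> -2"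
    by (auto intro!: derivative_eq_intros)
  have "DERIV (ces_power_sum \<rho>) t :>
      \<rho> * t powr (\<rho> - 1) + \<rho> / 2 * (2 * (1 - t)) powr (\<rho> / 2 - 1) * -2"
    unfolding ces_power_sum_def[abs_def]
    using has_real_derivative_powr[OF assms(1)] DERIV_chain2[OF outer inner] by (rule DERIV_add)
  then show ?thesis by simp
qed

lemma ces_power_sum_deriv_pos:
  fixes \<rho> t :: real
  assumes "0 < \<rho>" and "\<rho> < 1" and "0 < t" and "t \<le> 1/2"
  shows "0 < \<rho> * t powr (\<rho> - 1) - \<rho> * (2 * (1 - t)) powr (\<rho> / 2 - 1)"
proof -
  have "(2 * (1 - t)) powr (\<rho> / 2 - 1) \<le> 1"
    using powr_mono2'[of "\<rho> / 2 - 1" 1 "2 * (1 - t)"] assms by simp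
  also have "1 < (1/2::real) powr (\<rho> - 1)"
    using powr_less_mono'[of "1/2::real" "\<rho> - 1" 0] assms by simp
  also have "\<dots> \<le> t powr (\<rho> - 1)"
    using powr_mono2'[of "\<rho> - 1" t "1/2"] assms by simp
  finally show ?thesis
    using assms(1) by simp
qed

lemma ces_power_sum_less_half:
  assumes "0 < \<rho>" and "\<rho> < 1" and "0 \<le> a" and "a < 1/2"
  shows "ces_power_sum \<rho> a < ces_power_sum \<rho> (1/2)"
proof (rule DERIV_pos_imp_increasing_open[OF assms(4)])
  fix t assume "a < t" "t < 1/2"
  then show "\<exists>y. DERIV (ces_power_sum \<rho>) t :> y \<and> y > 0"
    using ces_power_sum_deriv[of t \<rho>] ces_power_sum_deriv_pos[of \<rho> t] assms by auto
next
  have "continuous_on {a..1/2} (\<lambda>t. t powr \<rho>)"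
    using assms by (intro continuous_on_powr') (auto intro: continuous_intros)
  moreover have "continuous_on {a..1/2} (\<lambda>t. (2 * (1 - t)) powr (\<rho> / 2))"
    using assms by (intro continuous_on_powr') (auto intro: continuous_intros)
  ultimately show "continuous_on {a..1/2} (ces_power_sum \<rho>)"
    unfolding ces_power_sum_def[abs_def] by (rule continuous_on_add)
qed

lemma ces_power_sum_beyond_half:
  assumes "0 < \<rho>" and "\<rho> < 1"
  obtains c where "1/2 < c" and "c < 1" and "ces_power_sum \<rho> (1/2) < ces_power_sum \<rho> c"
proof -
  have "DERIV (ces_power_sum \<rho>) (1/2) :> \<rho> * (1/2) powr (\<rho> - 1) - \<rho> * (2 * (1 - 1/2)) powr (\<rho> / 2 - 1)"
    by (rule ces_power_sum_deriv) auto
  moreover have "0 < \<rho> * (1/2) powr (\<rho> - 1) - \<rho> * (2 * (1 - 1/2)) powr (\<rho> / 2 - 1)"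
    using assms by (rule ces_power_sum_deriv_pos) auto
  ultimately obtain d where "0 < d"
    and d: "\<forall>h>0. h < d \<longrightarrow> ces_power_sum \<rho> (1/2) < ces_power_sum \<rho> (1/2 + h)"
    by (blast dest: DERIV_pos_inc_right)
  define h where "h = min (d / 2) (1/4)"
  have "0 < h" "h < d" "h \<le> 1/4"
    using \<open>0 < d\<close> by (auto simp: h_def)
  then show ?thesis
    using d that[of "1/2 + h"] by auto
qed

lemma Psi_budget_line_fst_gt_half:
  assumes "0 < \<rho>" and "\<rho> < 1" and "(a, 1 - a) \<in> Psi \<rho> (\<lambda>t. t) (\<lambda>t. sqrt (2 * t))"
  shows "1/2 < a"
proof (rule ccontr)
  assume "\<not> 1/2 < a"
  moreover have "0 \<le> a"
    using assms(3) by (simp add: Psi_def feasible_def)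
  ultimately have "ces_power_sum \<rho> a \<le> ces_power_sum \<rho> (1/2)"
    using ces_power_sum_less_half[OF assms(1,2), of a] by (metis le_less not_less)
  moreover obtain c where c: "1/2 < c" "c < 1" "ces_power_sum \<rho> (1/2) < ces_power_sum \<rho> c"
    using ces_power_sum_beyond_half[OF assms(1,2)] .
  ultimately have "ces_power_sum \<rho> a powr (1 / \<rho>) < ces_power_sum \<rho> c powr (1 / \<rho>)"
    using assms(1) by (intro powr_less_mono2) (auto simp: ces_power_sum_def)
  moreover have "feasible (c, 1 - c)"
    using c by (simp add: feasible_def)
  then have "ces_welfare \<rho> (\<lambda>t. t) (\<lambda>t. sqrt (2 * t)) (c, 1 - c)
      \<le> ces_welfare \<rho> (\<lambda>t. t) (\<lambda>t. sqrt (2 * t)) (a, 1 - a)"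
    using assms(3) unfolding Psi_def by blast
  ultimately show False
    using c \<open>\<not> 1/2 < a\<close> by (simp add: ces_welfare_budget_line)
qed

theorem mainTheorem12:
  fixes \<rho> :: real
  assumes "0 < \<rho>" and "\<rho> < 1"
  shows "\<not> (\<exists>x p. x \<in> Psi \<rho> (\<lambda>t. t) (\<lambda>t. sqrt (2 * t)) \<and>
                  (\<forall>y\<ge>0. p y \<ge> 0) \<and>
                  walrasian_eq (\<lambda>t. t) (\<lambda>t. sqrt (2 * t)) x p)"
proof
  assume "\<exists>x p. x \<in> Psi \<rho> (\<lambda>t. t) (\<lambda>t. sqrt (2 * t)) \<and>
                  (\<forall>y\<ge>0. p y \<ge> 0) \<and>
                  walrasian_eq (\<lambda>t. t) (\<lambda>t. sqrt (2 * t)) x p"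
  then obtain a b p where
    opt: "(a, b) \<in> Psi \<rho> (\<lambda>t. t) (\<lambda>t. sqrt (2 * t))" and
    eq: "walrasian_eq (\<lambda>t. t) (\<lambda>t. sqrt (2 * t)) (a, b) p" and
    nonneg: "\<forall>y\<ge>0. p y \<ge> 0"
    by auto
  have "strict_mono_on {0..} (\<lambda>t::real. t)"
    by (simp add: strict_mono_on_def)
  then have "b = 1 - a"
    using walrasian_eq_market_clears[OF eq _ nonneg] by simp
  moreover have "a \<le> 1"
    using opt by (simp add: Psi_def feasible_def)
  ultimately have "a \<le> 1/2"
    using eq walrasian_eq_fst_le_half by blast
  moreover have "1/2 < a"
    using Psi_budget_line_fst_gt_half[OF assms] opt \<open>b = 1 - a\<close> by blast
  ultimately show False by linarith
qed

end
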